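(* Let $p$ be a permutation of a finite set of integers, and let the largest letter of $p$ be $m=\max(p)$. Write $p=\alpha m\beta$ and $\alpha=a_1a_2\dotsm a_i$. Define the set $\mathrm{unS}(p)$ recursively by \[ \mathrm{unS}(p) \,=\, \bigcup_{j=0}^i \left\{\, \gamma m\delta \,\colon \gamma\in\mathrm{unS}(a_1a_2\dotsm a_j),\, \delta\in\mathrm{unS}(a_{j+1}\dotsm a_i\beta) \,\right\} \] (with $\mathrm{unS}$ of the empty word being the set containing only the empty word). Then $\mathrm{unS}(p)$ contains all classical patterns (up to standardization) that can become $p$ after one pass of stack-sort.
   Context: A pass of stack-sort $S$: the entries of a permutation are read left to right and pushed onto a stack, where the elements on the stack must always be increasing from top to bottom; before pushing an entry, any smaller-than-needed entries, i.e. every entry on top of the stack smaller than the incoming entry, are popped to the output; at the end the stack is emptied to the output. $\mathrm{unS}(p)$ is the list of candidate patterns, i.e. orderings of the letters of $p$ possible prior to sorting. A classical pattern is a permutation; a permutation contains it if some subsequence standardizes to it. *)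

theory Defs
  imports Main
begin

text \<open>The stack is a list with its top at the head.\<close>
fun stack_pass :: "int list \<Rightarrow> int list \<Rightarrow> int list" where
  "stack_pass st [] = st"
| "stack_pass st (x # xs) =
     takeWhile (\<lambda>y. y < x) st @ stack_pass (x # dropWhile (\<lambda>y. y < x) st) xs"

definition stack_sort :: "int list \<Rightarrow> int list" where
  "stack_sort q = stack_pass [] q"

lemma takeWhile_len_lt: "m \<in> set p \<Longrightarrow> length (takeWhile (\<lambda>x. x \<noteq> m) p) < length p"
  by (induction p) auto

lemma takeWhile_dropWhile_len:
  "m \<in> set p \<Longrightarrow> length (takeWhile (\<lambda>x. x \<noteq> m) p) + length (tl (dropWhile (\<lambda>x. x \<noteq> m) p)) < length p"
  by (induction p) auto

function unS :: "int list \<Rightarrow> int list set" where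
  "unS [] = {[]}"
| "unS (x # xs) =
    (let p = x # xs; m = Max (set p);
         \<alpha> = takeWhile (\<lambda>y. y \<noteq> m) p;
         \<beta> = tl (dropWhile (\<lambda>y. y \<noteq> m) p)
     in \<Union> (set (map (\<lambda>j. (\<lambda>(\<gamma>, \<delta>). \<gamma> @ [m] @ \<delta>) `
                          (unS (take j \<alpha>) \<times> unS (drop j \<alpha> @ \<beta>)))
                 [0..<Suc (length \<alpha>)])))"
  by pat_completeness auto
termination
proof (relation "measure length")
  fix x :: int and xs p m \<alpha> j
  assume h: "p = x # xs" "m = Max (set p)" "\<alpha> = takeWhile (\<lambda>y. y \<noteq> m) p"
  have mem: "m \<in> set p" unfolding h(2) by (rule Max_in) (simp_all add: h(1))
  show "(take j \<alpha>, x # xs) \<in> measure length"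
    using takeWhile_len_lt[OF mem] h by auto
next
  fix x :: int and xs p m \<alpha> \<beta> j
  assume h: "p = x # xs" "m = Max (set p)" "\<alpha> = takeWhile (\<lambda>y. y \<noteq> m) p"
     "\<beta> = tl (dropWhile (\<lambda>y. y \<noteq> m) p)"
  have mem: "m \<in> set p" unfolding h(2) by (rule Max_in) (simp_all add: h(1))
  show "(drop j \<alpha> @ \<beta>, x # xs) \<in> measure length"
    using takeWhile_dropWhile_len[OF mem] h by auto
qed auto

end

theory Submission
  imports Defs "HOL-Library.Multiset"
begin

text \<open>Induct on the length of a distinct list q with maximum m, written q = g m d.
  As m enters the stack it pops everything above it and then stays at the bottom until the end,
  so one pass sorts g, then d, and outputs m last: S(g m d) = S(g) S(d) m.
  The defining union of unS(S(g) S(d) m), taken at the split point j = |g|, contains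
  unS(S g) m unS(S d), which contains q = g m d by induction.\<close>

lemma mset_stack_pass: "mset (stack_pass st q) = mset st + mset q"
proof (induction q arbitrary: st)
  case Nil
  then show ?case by simp
next
  case (Cons x xs)
  have "mset (takeWhile (\<lambda>y. y < x) st) + mset (dropWhile (\<lambda>y. y < x) st) = mset st"
    by (metis mset_append takeWhile_dropWhile_id)
  then show ?case using Cons by (simp add: ac_simps)
qed

lemma mset_stack_sort: "mset (stack_sort q) = mset q"
  by (simp add: stack_sort_def mset_stack_pass)

lemma stack_pass_append_max:
  assumes "\<forall>y \<in> set st \<union> set g. y < m"
  shows "stack_pass st (g @ m # d) = stack_pass st g @ stack_pass [m] d"
  using assms
proof (induction g arbitrary: st)
  case Nil
  then have "takeWhile (\<lambda>y. y < m) st = st" "dropWhile (\<lambda>y. y < m) st = []"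
    by auto
  then show ?case by (simp only: append.simps stack_pass.simps)
next
  case (Cons x g)
  have "\<forall>y \<in> set (x # dropWhile (\<lambda>y. y < x) st) \<union> set g. y < m"
    using Cons.prems by (auto dest: set_dropWhileD)
  then show ?case by (simp add: Cons.IH)
qed

lemma stack_pass_snoc_max:
  assumes "\<forall>y \<in> set st \<union> set d. y < m"
  shows "stack_pass (st @ [m]) d = stack_pass st d @ [m]"
  using assms
proof (induction d arbitrary: st)
  case Nil
  then show ?case by simp
next
  case (Cons x d)
  have "takeWhile (\<lambda>y. y < x) (st @ [m]) = takeWhile (\<lambda>y. y < x) st"
    using Cons.prems by (simp add: takeWhile_append) (metis takeWhile_eq_all_conv)
  moreover have "dropWhile (\<lambda>y. y < x) (st @ [m]) = dropWhile (\<lambda>y. y < x) st @ [m]"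
    using Cons.prems by (simp add: dropWhile_append)
  moreover have "\<forall>y \<in> set (x # dropWhile (\<lambda>y. y < x) st) \<union> set d. y < m"
    using Cons.prems by (auto dest: set_dropWhileD)
  ultimately show ?case
    using Cons.IH[of "x # dropWhile (\<lambda>y. y < x) st"] by simp
qed

lemma stack_sort_split_max:
  assumes "\<forall>y \<in> set g \<union> set d. y < m"
  shows "stack_sort (g @ m # d) = stack_sort g @ stack_sort d @ [m]"
  using assms stack_pass_append_max[of "[]" g m d] stack_pass_snoc_max[of "[]" d m]
  by (simp add: stack_sort_def)

lemma unS_append_max:
  assumes "\<forall>y \<in> set \<alpha> \<union> set \<beta>. y < m"
  shows "unS (\<alpha> @ m # \<beta>) = (\<Union>j \<in> {..length \<alpha>}.
           (\<lambda>(\<gamma>, \<delta>). \<gamma> @ [m] @ \<delta>) ` (unS (take j \<alpha>) \<times> unS (drop j \<alpha> @ \<beta>)))"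
proof -
  obtain x xs where p: "\<alpha> @ m # \<beta> = x # xs"
    by (cases "\<alpha> @ m # \<beta>") auto
  have "m \<notin> set \<alpha>"
    using assms by auto
  then have "takeWhile (\<lambda>y. y \<noteq> m) (\<alpha> @ m # \<beta>) = \<alpha>"
    and "tl (dropWhile (\<lambda>y. y \<noteq> m) (\<alpha> @ m # \<beta>)) = \<beta>"
    by (auto simp: takeWhile_append dropWhile_append)
  moreover have "Max (set (\<alpha> @ m # \<beta>)) = m"
    using assms by (intro Max_eqI) (auto intro: less_imp_le)
  ultimately show ?thesis
    unfolding p unS.simps(2) Let_def unfolding p[symmetric]
    by (simp add: atMost_upto del: upt_Suc)
qed

lemma distinct_in_unS_stack_sort: "distinct q \<Longrightarrow> q \<in> unS (stack_sort q)"
proof (induction "length q" arbitrary: q rule: less_induct)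
  case less
  show ?case
  proof (cases "q = []")
    case True
    then show ?thesis by (simp add: stack_sort_def)
  next
    case False
    define m where "m = Max (set q)"
    have "m \<in> set q"
      using False by (simp add: m_def)
    then obtain g d where q: "q = g @ m # d"
      by (meson split_list)
    have "m \<notin> set g \<union> set d"
      using less.prems unfolding q by simp
    moreover have "y \<le> m" if "y \<in> set g \<union> set d" for y
      unfolding m_def using that by (intro Max_ge) (auto simp: q)
    ultimately have below: "\<forall>y \<in> set g \<union> set d. y < m"
      by (metis order_le_neq_trans)
    define \<alpha> where "\<alpha> = stack_sort g @ stack_sort d"
    have "length (stack_sort g) = length g"
      by (metis mset_stack_sort size_mset)
    then have split: "take (length g) \<alpha> = stack_sort g" "drop (length g) \<alpha> = stack_sort d"
      "length g \<le> length \<alpha>"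
      by (simp_all add: \<alpha>_def)
    have "set \<alpha> = set g \<union> set d"
      unfolding \<alpha>_def by (metis mset_stack_sort set_append set_mset_mset)
    then have unS_\<alpha>: "unS (\<alpha> @ m # []) = (\<Union>j \<in> {..length \<alpha>}.
        (\<lambda>(\<gamma>, \<delta>). \<gamma> @ [m] @ \<delta>) ` (unS (take j \<alpha>) \<times> unS (drop j \<alpha> @ [])))"
      using below by (intro unS_append_max) simp
    have "g \<in> unS (stack_sort g)" "d \<in> unS (stack_sort d)"
      using less q by auto
    then have "g @ [m] @ d \<in> (\<lambda>(\<gamma>, \<delta>). \<gamma> @ [m] @ \<delta>) `
        (unS (take (length g) \<alpha>) \<times> unS (drop (length g) \<alpha> @ []))"
      unfolding split by (intro image_eqI[of _ _ "(g, d)"]) simp_all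
    then have "q \<in> unS (\<alpha> @ m # [])"
      unfolding unS_\<alpha> q using split(3) by (intro UN_I[of "length g"]) simp_all
    then show ?thesis
      using stack_sort_split_max[OF below] q by (simp add: \<alpha>_def)
  qed
qed

theorem proposition4p1:
  fixes p q :: "int list"
  assumes "distinct p"
    and "stack_sort q = p"
  shows "q \<in> unS p"
proof -
  have "mset p = mset q"
    using assms(2) mset_stack_sort by blast
  then have "distinct q"
    using assms(1) mset_eq_imp_distinct_iff by blast
  then show ?thesis
    using distinct_in_unS_stack_sort assms(2) by blast
qed

end
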